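(* Consider a network given by a finite directed graph whose vertex set consists of one or more gateway nodes together with $N\ge 1$ non-gateway nodes indexed by $\Gamma=\{1,\dots,N\}$, and whose directed edges (links) are indexed by $\Lambda=\{1,\dots,L\}$. For each non-gateway node $i\in\Gamma$ let $I_i\subseteq\Lambda$ be the set of links entering $i$ and $O_i\subseteq\Lambda$ the set of links leaving $i$. Let $S_l>0$ ($l\in\Lambda$), $n>0$ and $I_{k\to l}\ge 0$ ($k,l\in\Lambda$, $k\neq l$) be given, and for every nonempty $A\subseteq\Lambda$ and $l\in A$ define $$\gamma_{l,A}=\log\Big(1+\frac{S_l}{n+\sum_{k\in A\setminus\{l\}} I_{k\to l}}\Big).$$ Let $\alpha_i>0$ ($i\in\Gamma$) be given weights. Consider the linear program, over variables $x_A$ (one for each nonempty $A\subseteq\Lambda$), $r_l$ ($l\in\Lambda$), $d_i$ ($i\in\Gamma$) and $d$: maximize $d$ subject to $\sum_{A} x_A=1$; $r_l=\sum_{A\ni l} x_A\gamma_{l,A}$ for all $l\in\Lambda$; $\sum_{l\in I_i} r_l-\sum_{k\in O_i} r_k=d_i$ for all $i\in\Gamma$; $d_i\ge \alpha_i d$ for all $i\in\Gamma$; $x_A\ge 0$ for all nonempty $A\subseteq\Lambda$. Then this linear program has an optimal solution in which at most $N$ of the variables $x_A$ are nonzero. *)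

theory Defs
  imports Complex_Main
begin

definition link_sets :: "nat \<Rightarrow> nat set set" where
  "link_sets L = {A. A \<subseteq> {1..L} \<and> A \<noteq> {}}"

definition gamma :: "(nat \<Rightarrow> real) \<Rightarrow> real \<Rightarrow> (nat \<Rightarrow> nat \<Rightarrow> real) \<Rightarrow> nat \<Rightarrow> nat set \<Rightarrow> real" where
  "gamma S n Intf l A = ln (1 + S l / (n + (\<Sum>k\<in>A - {l}. Intf k l)))"

text \<open>Feasibility for the linear program. \<open>Inc i\<close> / \<open>Out i\<close> are the links entering / leaving node i;
  \<open>x\<close> is indexed by link sets, \<open>r\<close> by links, \<open>dd\<close> by non-gateway nodes.\<close>
definition lp_feasible ::
  "nat \<Rightarrow> nat \<Rightarrow> (nat \<Rightarrow> nat set) \<Rightarrow> (nat \<Rightarrow> nat set) \<Rightarrow> (nat \<Rightarrow> real) \<Rightarrow> real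
   \<Rightarrow> (nat \<Rightarrow> nat \<Rightarrow> real) \<Rightarrow> (nat \<Rightarrow> real)
   \<Rightarrow> (nat set \<Rightarrow> real) \<Rightarrow> (nat \<Rightarrow> real) \<Rightarrow> (nat \<Rightarrow> real) \<Rightarrow> real \<Rightarrow> bool" where
  "lp_feasible L N Inc Out S n Intf alpha x r dd d \<longleftrightarrow>
     (\<Sum>A\<in>link_sets L. x A) = 1 \<and>
     (\<forall>l\<in>{1..L}. r l = (\<Sum>A\<in>{A\<in>link_sets L. l \<in> A}. x A * gamma S n Intf l A)) \<and>
     (\<forall>i\<in>{1..N}. (\<Sum>l\<in>Inc i. r l) - (\<Sum>k\<in>Out i. r k) = dd i) \<and>
     (\<forall>i\<in>{1..N}. dd i \<ge> alpha i * d) \<and>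
     (\<forall>A\<in>link_sets L. x A \<ge> 0)"

definition lp_optimal ::
  "nat \<Rightarrow> nat \<Rightarrow> (nat \<Rightarrow> nat set) \<Rightarrow> (nat \<Rightarrow> nat set) \<Rightarrow> (nat \<Rightarrow> real) \<Rightarrow> real
   \<Rightarrow> (nat \<Rightarrow> nat \<Rightarrow> real) \<Rightarrow> (nat \<Rightarrow> real)
   \<Rightarrow> (nat set \<Rightarrow> real) \<Rightarrow> (nat \<Rightarrow> real) \<Rightarrow> (nat \<Rightarrow> real) \<Rightarrow> real \<Rightarrow> bool" where
  "lp_optimal L N Inc Out S n Intf alpha x r dd d \<longleftrightarrow>
     lp_feasible L N Inc Out S n Intf alpha x r dd d \<and>
     (\<forall>x' r' dd' d'. lp_feasible L N Inc Out S n Intf alpha x' r' dd' d' \<longrightarrow> d' \<le> d)"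

end

theory Submission
  imports Defs
begin

text \<open>Eliminating \<open>r\<close> and the \<open>d\<^sub>i\<close>, the program asks to maximise \<open>d\<close> over the probability
  simplex on link sets subject to one linear constraint \<open>\<Sum>\<^sub>A x\<^sub>A c\<^sub>i\<^sub>A \<ge> \<alpha>\<^sub>i d\<close> per node,
  where \<open>c\<^sub>i\<^sub>A\<close> is the net rate into node \<open>i\<close> while \<open>A\<close> is active.
  Call a feasible \<open>(x, d)\<close> a vertex if no nonzero direction \<open>(y, t)\<close> keeps its support, the
  normalisation and its tight constraints. If the support of a vertex had more than \<open>N\<close>
  elements, then together with \<open>t\<close> the unknowns would outnumber the at most \<open>N + 1\<close> equations,
  so a vertex has at most \<open>N\<close> nonzero \<open>x\<^sub>A\<close>. Every feasible point is dominated by a vertex: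
  walk along a direction that does not decrease \<open>d\<close> until a coordinate of \<open>x\<close> vanishes or
  a further constraint becomes tight. A vertex value is determined by the support and the set
  of tight constraints, so there are finitely many of them and the largest one is optimal.
  Neither the sign of the \<open>\<gamma>\<^sub>l\<^sub>,\<^sub>A\<close> nor the gateways play any role.\<close>

lemma homogeneous_system_nontrivial_solution:
  fixes f :: "'e \<Rightarrow> 'v \<Rightarrow> real"
  assumes "finite E" "finite V" "card E < card V"
  shows "\<exists>y. (\<exists>v\<in>V. y v \<noteq> 0) \<and> (\<forall>e\<in>E. (\<Sum>v\<in>V. f e v * y v) = 0)"
  using assms
proof (induction E arbitrary: V f rule: finite_induct)
  case empty
  then obtain v0 where "v0 \<in> V" by fastforce
  then show ?case by (intro exI[of _ "\<lambda>v. 1"]) auto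
next
  case (insert e E)
  show ?case
  proof (cases "\<forall>v\<in>V. f e v = 0")
    case True
    with insert show ?thesis by fastforce
  next
    case False
    then obtain v0 where v0: "v0 \<in> V" "f e v0 \<noteq> 0" by auto
    define V' where "V' = V - {v0}"
    \<comment> \<open>Gaussian elimination of the unknown \<open>v0\<close> using equation \<open>e\<close>.\<close>
    define f' where "f' e' v = f e' v - f e' v0 / f e v0 * f e v" for e' v
    have "finite V'" "card E < card V'" using insert v0 by (auto simp: V'_def)
    from insert.IH[OF this, of f'] obtain y' where y': "\<exists>v\<in>V'. y' v \<noteq> 0"
      "\<forall>e'\<in>E. (\<Sum>v\<in>V'. f' e' v * y' v) = 0" by blast
    define y where "y v = (if v = v0 then - (\<Sum>w\<in>V'. f e w * y' w) / f e v0 else y' v)" for v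
    have sum_y: "(\<Sum>v\<in>V. g v * y v) = g v0 * y v0 + (\<Sum>v\<in>V'. g v * y' v)" for g
    proof -
      have "(\<Sum>v\<in>V. g v * y v) = g v0 * y v0 + (\<Sum>v\<in>V'. g v * y v)"
        using v0 insert.prems(1) by (simp add: V'_def sum.remove)
      also have "(\<Sum>v\<in>V'. g v * y v) = (\<Sum>v\<in>V'. g v * y' v)"
        by (rule sum.cong) (auto simp: y_def V'_def)
      finally show ?thesis .
    qed
    have "(\<Sum>v\<in>V. f e' v * y v) = (\<Sum>v\<in>V'. f' e' v * y' v)" for e'
    proof -
      have "(\<Sum>v\<in>V. f e' v * y v) = f e' v0 * y v0 + (\<Sum>v\<in>V'. f e' v * y' v)"
        by (rule sum_y)
      also have "\<dots> = (\<Sum>v\<in>V'. f' e' v * y' v)"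
        using v0(2)
        by (simp add: y_def f'_def sum_subtractf sum_distrib_left sum_divide_distrib algebra_simps)
      finally show ?thesis .
    qed
    moreover have "(\<Sum>v\<in>V. f e v * y v) = 0"
      unfolding sum_y using v0(2) by (simp add: y_def)
    moreover have "\<exists>v\<in>V. y v \<noteq> 0"
      using y'(1) by (auto simp: y_def V'_def)
    ultimately show ?thesis using y'(2) by (intro exI[of _ y]) auto
  qed
qed

lemma ratio_test:
  fixes a b :: "'k \<Rightarrow> real"
  assumes "finite K" "K \<noteq> {}" "\<And>k. k \<in> K \<Longrightarrow> 0 < a k" "\<And>k. k \<in> K \<Longrightarrow> b k < 0"
  shows "\<exists>s>0. (\<forall>k\<in>K. 0 \<le> a k + s * b k) \<and> (\<exists>k\<in>K. a k + s * b k = 0)"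
proof -
  define s where "s = Min ((\<lambda>k. a k / - b k) ` K)"
  have "s \<in> (\<lambda>k. a k / - b k) ` K"
    unfolding s_def using assms(1,2) by (intro Min_in) auto
  then obtain k0 where k0: "k0 \<in> K" "s = a k0 / - b k0" by blast
  have "s > 0" using k0 assms(3,4)[OF k0(1)] by (simp add: divide_pos_neg)
  moreover have "0 \<le> a k + s * b k" if "k \<in> K" for k
  proof -
    have "s \<le> a k / - b k" using that assms(1) by (simp add: s_def)
    then show ?thesis using assms(4)[OF that] by (simp add: field_simps)
  qed
  moreover have "a k0 + s * b k0 = 0" using k0 assms(4)[OF k0(1)] by simp
  ultimately show ?thesis using k0(1) by blast
qed

locale max_min_lp =
  fixes M :: "'a set" and I :: "'i set" and c :: "'i \<Rightarrow> 'a \<Rightarrow> real" and alpha :: "'i \<Rightarrow> real"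
  assumes finite_M: "finite M" and M_nonempty: "M \<noteq> {}"
    and finite_I: "finite I" and I_nonempty: "I \<noteq> {}"
    and alpha_pos: "\<And>i. i \<in> I \<Longrightarrow> 0 < alpha i"
begin

definition gain :: "'i \<Rightarrow> ('a \<Rightarrow> real) \<Rightarrow> real" where
  "gain i x = (\<Sum>A\<in>M. x A * c i A)"

definition feasible :: "('a \<Rightarrow> real) \<Rightarrow> real \<Rightarrow> bool" where
  "feasible x d \<longleftrightarrow> (\<forall>A\<in>M. 0 \<le> x A) \<and> sum x M = 1 \<and> (\<forall>i\<in>I. alpha i * d \<le> gain i x)"

definition support :: "('a \<Rightarrow> real) \<Rightarrow> 'a set" where
  "support x = {A\<in>M. x A \<noteq> 0}"

definition tight :: "('a \<Rightarrow> real) \<Rightarrow> real \<Rightarrow> 'i set" where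
  "tight x d = {i\<in>I. gain i x = alpha i * d}"

definition direction :: "('a \<Rightarrow> real) \<Rightarrow> real \<Rightarrow> ('a \<Rightarrow> real) \<Rightarrow> real \<Rightarrow> bool" where
  "direction x d y t \<longleftrightarrow>
     (\<forall>A\<in>M - support x. y A = 0) \<and> sum y M = 0 \<and> (\<forall>i\<in>tight x d. gain i y = alpha i * t)"

definition vertex :: "('a \<Rightarrow> real) \<Rightarrow> real \<Rightarrow> bool" where
  "vertex x d \<longleftrightarrow> feasible x d \<and> (\<forall>y t. direction x d y t \<longrightarrow> (\<forall>A\<in>M. y A = 0) \<and> t = 0)"

lemma gain_add_scaled: "gain i (\<lambda>A. x A + s * y A) = gain i x + s * gain i y"
  by (simp add: gain_def sum.distrib sum_distrib_left algebra_simps)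

lemma gain_uminus: "gain i (\<lambda>A. - y A) = - gain i y"
  by (simp add: gain_def sum_negf)

lemma gain_diff: "gain i (\<lambda>A. x A - y A) = gain i x - gain i y"
  by (simp add: gain_def sum_subtractf algebra_simps)

lemma direction_uminus: "direction x d y t \<Longrightarrow> direction x d (\<lambda>A. - y A) (- t)"
  by (auto simp: direction_def gain_uminus sum_negf)

lemma non_vertex_direction:
  assumes "feasible x d" "\<not> vertex x d"
  obtains y t where "direction x d y t" "0 \<le> t" "t = 0 \<longrightarrow> (\<exists>A\<in>M. y A < 0)"
proof -
  obtain y t where dir: "direction x d y t" and nonzero: "(\<exists>A\<in>M. y A \<noteq> 0) \<or> t \<noteq> 0"
    using assms by (auto simp: vertex_def)
  consider "t > 0" | "t < 0" | "t = 0" "\<exists>A\<in>M. y A < 0" | "t = 0" "\<exists>A\<in>M. y A > 0"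
    using nonzero by (metis linorder_neqE_linordered_idom)
  then show thesis
    by cases (use that[OF dir] that[OF direction_uminus[OF dir]] in auto)
qed

lemma direction_blocked:
  assumes "direction x d y t" "0 \<le> t" "t = 0 \<longrightarrow> (\<exists>A\<in>M. y A < 0)"
  shows "(\<exists>A\<in>M. y A < 0) \<or> (\<exists>i\<in>I - tight x d. gain i y < alpha i * t)"
proof (rule ccontr)
  assume "\<not> ?thesis"
  then have y_nonneg: "\<forall>A\<in>M. 0 \<le> y A" and rates: "\<forall>i\<in>I - tight x d. alpha i * t \<le> gain i y"
    by (auto simp: not_less)
  then have "t > 0" using assms(2,3) by force
  have "\<forall>A\<in>M. y A = 0"
    using y_nonneg assms(1) finite_M by (simp add: direction_def sum_nonneg_eq_0_iff)
  then have "gain i y = 0" for i by (simp add: gain_def)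
  moreover obtain i where "i \<in> I" using I_nonempty by blast
  moreover have "alpha i * t \<le> gain i y" if "i \<in> I" for i
    using that rates assms(1) by (cases "i \<in> tight x d") (auto simp: direction_def)
  ultimately show False using alpha_pos \<open>t > 0\<close> by (metis mult_pos_pos not_less)
qed

lemma support_step:
  "direction x d y t \<Longrightarrow> support (\<lambda>A. x A + s * y A) \<subseteq> support x"
  by (auto simp: support_def direction_def)

lemma tight_step:
  "direction x d y t \<Longrightarrow> tight x d \<subseteq> tight (\<lambda>A. x A + s * y A) (d + s * t)"
  by (auto simp: tight_def direction_def gain_add_scaled algebra_simps)

text \<open>The step length is given by the ratio test over the coordinates of \<open>x\<close> that decrease
  and the slacks of non-tight constraints that decrease; the blocking one leaves the support
  or becomes tight.\<close>
lemma improving_step: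
  assumes feas: "feasible x d" and dir: "direction x d y t"
    and "0 \<le> t" "t = 0 \<longrightarrow> (\<exists>A\<in>M. y A < 0)"
  obtains x' d' where "feasible x' d'" "d \<le> d'"
    "card (support x') + card (I - tight x' d') < card (support x) + card (I - tight x d)"
proof -
  define slack where "slack i = gain i x - alpha i * d" for i
  define rate where "rate i = gain i y - alpha i * t" for i
  define K where "K = Inl ` {A\<in>M. y A < 0} \<union> Inr ` {i\<in>I - tight x d. rate i < 0}"
  define a where "a = case_sum x slack"
  define b where "b = case_sum y rate"
  have x_nonneg: "\<forall>A\<in>M. 0 \<le> x A" and slack_nonneg: "\<forall>i\<in>I. 0 \<le> slack i"
    using feas by (auto simp: feasible_def slack_def)
  have "finite K" using finite_M finite_I by (simp add: K_def)
  moreover have "K \<noteq> {}"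
    using direction_blocked[OF dir assms(3,4)] by (auto simp: K_def rate_def)
  moreover have "0 < a k" if "k \<in> K" for k
    using that x_nonneg slack_nonneg dir
    by (force simp: K_def a_def direction_def support_def tight_def slack_def)
  moreover have "b k < 0" if "k \<in> K" for k
    using that by (auto simp: K_def b_def)
  ultimately obtain s where "s > 0" and K_nonneg: "\<forall>k\<in>K. 0 \<le> a k + s * b k"
    and blocking: "\<exists>k\<in>K. a k + s * b k = 0"
    by (blast dest: ratio_test)
  define x' where "x' = (\<lambda>A. x A + s * y A)"
  define d' where "d' = d + s * t"
  have gain_step: "gain i x' - alpha i * d' = slack i + s * rate i" for i
    by (simp add: x'_def d'_def gain_add_scaled slack_def rate_def algebra_simps)
  have "feasible x' d'"
    unfolding feasible_def
  proof (intro conjI ballI)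
    fix A assume "A \<in> M"
    then show "0 \<le> x' A"
      using K_nonneg[rule_format, of "Inl A"] x_nonneg \<open>s > 0\<close>
      by (cases "y A < 0") (auto simp: K_def a_def b_def x'_def)
  next
    show "sum x' M = 1"
      using feas dir by (simp add: x'_def sum.distrib feasible_def direction_def flip: sum_distrib_left)
  next
    fix i assume "i \<in> I"
    have "0 \<le> slack i + s * rate i"
    proof (cases "i \<in> tight x d")
      case True
      then show ?thesis using dir by (simp add: direction_def tight_def slack_def rate_def)
    next
      case False
      then show ?thesis
        using K_nonneg[rule_format, of "Inr i"] slack_nonneg \<open>i \<in> I\<close> \<open>s > 0\<close>
        by (cases "rate i < 0") (auto simp: K_def a_def b_def)
    qed
    then show "alpha i * d' \<le> gain i x'" using gain_step[of i] by simp
  qed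
  moreover have "d \<le> d'" using \<open>s > 0\<close> \<open>0 \<le> t\<close> by (simp add: d'_def)
  moreover have "card (support x') + card (I - tight x' d') < card (support x) + card (I - tight x d)"
  proof -
    have sub: "support x' \<subseteq> support x" "I - tight x' d' \<subseteq> I - tight x d"
      using support_step[OF dir] tight_step[OF dir] by (auto simp: x'_def d'_def)
    have fin: "finite (support x)" "finite (I - tight x d)"
      using finite_M finite_I by (auto simp: support_def)
    from blocking obtain k where k: "k \<in> K" "a k + s * b k = 0" by blast
    have "support x' \<subset> support x \<or> I - tight x' d' \<subset> I - tight x d"
    proof (cases k)
      case (Inl A)
      then have "A \<in> support x" "A \<notin> support x'"
        using k \<open>s > 0\<close> by (auto simp: K_def a_def b_def x'_def support_def)
      then show ?thesis using sub by blast
    next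
      case (Inr i)
      then have "i \<in> I - tight x d" "i \<in> tight x' d'"
        using k gain_step[of i] by (auto simp: K_def a_def b_def tight_def slack_def)
      then show ?thesis using sub by blast
    qed
    then show ?thesis
      using sub fin by (meson add_le_less_mono add_less_le_mono card_mono psubset_card_mono)
  qed
  ultimately show thesis by (rule that)
qed

lemma feasible_le_vertex:
  "feasible x d \<Longrightarrow> \<exists>x' d'. vertex x' d' \<and> d \<le> d'"
proof (induction "card (support x) + card (I - tight x d)" arbitrary: x d rule: less_induct)
  case less
  show ?case
  proof (cases "vertex x d")
    case True
    then show ?thesis by blast
  next
    case False
    obtain y t where "direction x d y t" "0 \<le> t" "t = 0 \<longrightarrow> (\<exists>A\<in>M. y A < 0)"
      by (rule non_vertex_direction[OF \<open>feasible x d\<close> False])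
    then obtain x' d' where "feasible x' d'" "d \<le> d'"
      and smaller: "card (support x') + card (I - tight x' d') < card (support x) + card (I - tight x d)"
      by (rule improving_step[OF \<open>feasible x d\<close>])
    from less.hyps[OF smaller \<open>feasible x' d'\<close>] obtain x'' d'' where "vertex x'' d''" "d' \<le> d''"
      by blast
    then show ?thesis using \<open>d \<le> d'\<close> by (meson order.trans)
  qed
qed

lemma vertex_value_unique:
  assumes "vertex x d" "vertex x' d'" "support x = support x'" "tight x d = tight x' d'"
  shows "d = d'"
proof -
  have "feasible x d" "feasible x' d'" using assms(1,2) by (auto simp: vertex_def)
  have "direction x d (\<lambda>A. x A - x' A) (d - d')"
    unfolding direction_def
  proof (intro conjI ballI)
    fix A assume "A \<in> M - support x"
    then show "x A - x' A = 0" using assms(3) by (auto simp: support_def)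
  next
    show "(\<Sum>A\<in>M. x A - x' A) = 0"
      using \<open>feasible x d\<close> \<open>feasible x' d'\<close> by (simp add: sum_subtractf feasible_def)
  next
    fix i assume "i \<in> tight x d"
    moreover from this have "i \<in> tight x' d'" using assms(4) by simp
    ultimately show "gain i (\<lambda>A. x A - x' A) = alpha i * (d - d')"
      by (simp add: gain_diff tight_def right_diff_distrib)
  qed
  then have "d - d' = 0" using assms(1) unfolding vertex_def by blast
  then show ?thesis by simp
qed

lemma finite_vertex_values: "finite {d. \<exists>x. vertex x d}"
proof -
  define witness where "witness d = (SOME x. vertex x d)" for d
  define pattern where "pattern d = (support (witness d), tight (witness d) d)" for d
  have "vertex (witness d) d" if "d \<in> {d. \<exists>x. vertex x d}" for d
    using that someI_ex[of "\<lambda>x. vertex x d"] by (auto simp: witness_def)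
  then have "inj_on pattern {d. \<exists>x. vertex x d}"
    by (intro inj_onI) (auto simp: pattern_def intro: vertex_value_unique)
  moreover have "pattern ` {d. \<exists>x. vertex x d} \<subseteq> Pow M \<times> Pow I"
    by (auto simp: pattern_def support_def tight_def)
  ultimately show ?thesis
    using finite_M finite_I by (meson finite_Pow_iff finite_SigmaI finite_subset inj_on_finite)
qed

lemma feasible_exists: "\<exists>x d. feasible x d"
proof -
  obtain A0 where "A0 \<in> M" using M_nonempty by blast
  define x where "x A = (if A = A0 then 1 else 0 :: real)" for A
  define d where "d = Min ((\<lambda>i. c i A0 / alpha i) ` I)"
  have gain_x: "gain i x = c i A0" for i
    using \<open>A0 \<in> M\<close> finite_M
    by (simp add: gain_def x_def if_distrib[of "\<lambda>z. z * _"] sum.delta cong: if_cong)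
  have "alpha i * d \<le> gain i x" if "i \<in> I" for i
  proof -
    have "d \<le> c i A0 / alpha i" using that finite_I by (simp add: d_def)
    then show ?thesis using alpha_pos[OF that] by (simp add: gain_x pos_le_divide_eq mult.commute)
  qed
  then have "feasible x d"
    using \<open>A0 \<in> M\<close> finite_M by (simp add: feasible_def x_def)
  then show ?thesis by blast
qed

lemma optimal_vertex_exists: "\<exists>x d. vertex x d \<and> (\<forall>x' d'. feasible x' d' \<longrightarrow> d' \<le> d)"
proof -
  define V where "V = {d. \<exists>x. vertex x d}"
  have "finite V" using finite_vertex_values by (simp add: V_def)
  obtain x0 d0 where "feasible x0 d0" using feasible_exists by blast
  then obtain x1 d1 where "vertex x1 d1" using feasible_le_vertex by blast
  then have "V \<noteq> {}" by (auto simp: V_def)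
  then have "Max V \<in> V" using \<open>finite V\<close> by simp
  then obtain x where "vertex x (Max V)" by (auto simp: V_def)
  moreover have "d' \<le> Max V" if "feasible x' d'" for x' d'
  proof -
    obtain x'' d'' where "vertex x'' d''" "d' \<le> d''" using feasible_le_vertex[OF \<open>feasible x' d'\<close>] by blast
    then have "d'' \<in> V" by (auto simp: V_def)
    then have "d'' \<le> Max V" using \<open>finite V\<close> by simp
    then show ?thesis using \<open>d' \<le> d''\<close> by simp
  qed
  ultimately show ?thesis by blast
qed

text \<open>The unknowns are \<open>y\<close> on \<open>T\<close> together with \<open>t\<close> (the index \<open>None\<close>); the equations are
  the normalisation (index \<open>None\<close>) and one equation per element of \<open>J\<close>.\<close>
lemma nonzero_direction_exists:
  assumes "T \<subseteq> M" "J \<subseteq> I" "card J < card T"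
  obtains y t where "\<forall>A\<in>M - T. y A = 0" "sum y M = 0" "\<forall>i\<in>J. gain i y = alpha i * t"
    "(\<exists>A\<in>T. y A \<noteq> 0) \<or> t \<noteq> 0"
proof -
  have "finite T" "finite J"
    using assms(1,2) finite_M finite_I by (auto intro: finite_subset)
  have sum_option: "(\<Sum>v\<in>insert None (Some ` X). g v) = g None + (\<Sum>A\<in>X. g (Some A))"
    if "finite X" for X and g :: "'b option \<Rightarrow> real"
    using that by (simp add: sum.reindex)
  define coeff where "coeff e v =
    (case (e, v) of (None, None) \<Rightarrow> 0 | (None, Some A) \<Rightarrow> 1
      | (Some i, None) \<Rightarrow> - alpha i | (Some i, Some A) \<Rightarrow> c i A)" for e v
  have "card (insert None (Some ` J)) < card (insert None (Some ` T))"
    using assms(3) \<open>finite T\<close> \<open>finite J\<close> by (simp add: card_image)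
  then obtain z where nonzero: "\<exists>v\<in>insert None (Some ` T). z v \<noteq> 0"
    and solves: "\<forall>e\<in>insert None (Some ` J). (\<Sum>v\<in>insert None (Some ` T). coeff e v * z v) = 0"
    using homogeneous_system_nontrivial_solution[of "insert None (Some ` J)" "insert None (Some ` T)" coeff]
      \<open>finite T\<close> \<open>finite J\<close> by blast
  have equation: "coeff e None * z None + (\<Sum>A\<in>T. coeff e (Some A) * z (Some A)) = 0"
    if "e \<in> insert None (Some ` J)" for e
    using solves that unfolding sum_option[OF \<open>finite T\<close>] by blast
  define y where "y A = (if A \<in> T then z (Some A) else 0)" for A
  have sum_y: "(\<Sum>A\<in>M. y A * k A) = (\<Sum>A\<in>T. z (Some A) * k A)" for k
  proof -
    have "(\<Sum>A\<in>M. y A * k A) = (\<Sum>A\<in>T. y A * k A)"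
      using assms(1) finite_M by (intro sum.mono_neutral_right) (auto simp: y_def)
    also have "\<dots> = (\<Sum>A\<in>T. z (Some A) * k A)" by (simp add: y_def)
    finally show ?thesis .
  qed
  show thesis
  proof (rule that[of y "z None"])
    show "\<forall>A\<in>M - T. y A = 0" by (simp add: y_def)
    show "sum y M = 0"
      using sum_y[of "\<lambda>_. 1"] equation[of None] by (simp add: coeff_def)
    show "\<forall>i\<in>J. gain i y = alpha i * z None"
    proof
      fix i assume "i \<in> J"
      then show "gain i y = alpha i * z None"
        using equation[of "Some i"] by (simp add: gain_def sum_y coeff_def algebra_simps)
    qed
    show "(\<exists>A\<in>T. y A \<noteq> 0) \<or> z None \<noteq> 0"
      using nonzero by (auto simp: y_def)
  qed
qed

lemma vertex_support_card_le:
  assumes "vertex x d"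
  shows "card (support x) \<le> card I"
proof (rule ccontr)
  assume "\<not> ?thesis"
  then have "card (tight x d) < card (support x)"
    using card_mono[OF finite_I, of "tight x d"] by (auto simp: tight_def)
  moreover have "support x \<subseteq> M" "tight x d \<subseteq> I" by (auto simp: support_def tight_def)
  ultimately obtain y t where "\<forall>A\<in>M - support x. y A = 0" "sum y M = 0"
    "\<forall>i\<in>tight x d. gain i y = alpha i * t" and nonzero: "(\<exists>A\<in>support x. y A \<noteq> 0) \<or> t \<noteq> 0"
    using nonzero_direction_exists by metis
  then have "direction x d y t" by (simp add: direction_def)
  with assms have "(\<forall>A\<in>M. y A = 0) \<and> t = 0" by (simp add: vertex_def)
  with nonzero show False by (auto simp: support_def)
qed

end

definition net_rate :: "nat set \<Rightarrow> nat set \<Rightarrow> (nat \<Rightarrow> nat set \<Rightarrow> real) \<Rightarrow> nat set \<Rightarrow> real" where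
  "net_rate P Q g A = (\<Sum>l\<in>P \<inter> A. g l A) - (\<Sum>l\<in>Q \<inter> A. g l A)"

lemma finite_link_sets: "finite (link_sets L)"
  by (rule finite_subset[of _ "Pow {1..L}"]) (auto simp: link_sets_def)

lemma link_sets_nonempty: "1 \<le> L \<Longrightarrow> link_sets L \<noteq> {}"
  by (auto simp: link_sets_def intro!: exI[of _ "{1}"])

lemma sum_link_rates:
  fixes x :: "nat set \<Rightarrow> real"
  assumes "\<forall>l\<in>{1..L}. r l = (\<Sum>A\<in>{A\<in>link_sets L. l \<in> A}. x A * g l A)" "P \<subseteq> {1..L}"
  shows "(\<Sum>l\<in>P. r l) = (\<Sum>A\<in>link_sets L. x A * (\<Sum>l\<in>P \<inter> A. g l A))"
proof -
  have "finite P" using assms(2) finite_subset by blast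
  have "(\<Sum>l\<in>P. r l) = (\<Sum>l\<in>P. \<Sum>A\<in>{A\<in>link_sets L. l \<in> A}. x A * g l A)"
    using assms by (intro sum.cong) auto
  also have "\<dots> = (\<Sum>A\<in>link_sets L. \<Sum>l\<in>{l\<in>P. l \<in> A}. x A * g l A)"
    using \<open>finite P\<close> finite_link_sets by (rule sum.swap_restrict)
  also have "\<dots> = (\<Sum>A\<in>link_sets L. x A * (\<Sum>l\<in>P \<inter> A. g l A))"
    by (simp add: sum_distrib_left Collect_conj_eq)
  finally show ?thesis .
qed

lemma net_flow_eq_net_rate:
  fixes x :: "nat set \<Rightarrow> real"
  assumes "\<forall>l\<in>{1..L}. r l = (\<Sum>A\<in>{A\<in>link_sets L. l \<in> A}. x A * g l A)"
    and "P \<subseteq> {1..L}" "Q \<subseteq> {1..L}"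
  shows "(\<Sum>l\<in>P. r l) - (\<Sum>k\<in>Q. r k) = (\<Sum>A\<in>link_sets L. x A * net_rate P Q g A)"
  using sum_link_rates[OF assms(1,2)] sum_link_rates[OF assms(1,3)]
  by (simp add: net_rate_def sum_subtractf right_diff_distrib)

lemma max_min_lp_link_sets:
  fixes N L :: nat and alpha :: "nat \<Rightarrow> real"
  assumes "1 \<le> N" "1 \<le> L" "\<forall>i\<in>{1..N}. 0 < alpha i"
  shows "max_min_lp (link_sets L) {1..N} alpha"
  using assms finite_link_sets link_sets_nonempty by unfold_locales auto

context
  fixes L N :: nat and Inc Out :: "nat \<Rightarrow> nat set" and S :: "nat \<Rightarrow> real" and n :: real
    and Intf :: "nat \<Rightarrow> nat \<Rightarrow> real" and alpha :: "nat \<Rightarrow> real"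
  assumes links: "\<forall>i. Inc i \<subseteq> {1..L} \<and> Out i \<subseteq> {1..L}"
    and lp: "max_min_lp (link_sets L) {1..N} alpha"
begin

interpretation max_min_lp "link_sets L" "{1..N}" "\<lambda>i. net_rate (Inc i) (Out i) (gamma S n Intf)" alpha
  by (rule lp)

lemma lp_node_balance_eq_gain:
  assumes "\<forall>l\<in>{1..L}. r l = (\<Sum>A\<in>{A\<in>link_sets L. l \<in> A}. x A * gamma S n Intf l A)"
  shows "(\<Sum>l\<in>Inc i. r l) - (\<Sum>k\<in>Out i. r k) = gain i x"
  using net_flow_eq_net_rate[OF assms] links by (simp add: gain_def)

lemma lp_feasible_imp_feasible:
  assumes "lp_feasible L N Inc Out S n Intf alpha x r dd d"
  shows "feasible x d"
proof -
  have "\<forall>l\<in>{1..L}. r l = (\<Sum>A\<in>{A\<in>link_sets L. l \<in> A}. x A * gamma S n Intf l A)"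
    using assms by (simp add: lp_feasible_def)
  from lp_node_balance_eq_gain[OF this] assms show ?thesis
    unfolding feasible_def lp_feasible_def by simp
qed

lemma feasible_imp_lp_feasible:
  assumes "feasible x d"
  shows "lp_feasible L N Inc Out S n Intf alpha x
    (\<lambda>l. \<Sum>A\<in>{A\<in>link_sets L. l \<in> A}. x A * gamma S n Intf l A) (\<lambda>i. gain i x) d"
  using lp_node_balance_eq_gain assms unfolding feasible_def lp_feasible_def by simp

end

theorem theorem1:
  fixes N L :: nat and Gw :: "nat set" and src dst :: "nat \<Rightarrow> nat"
    and S :: "nat \<Rightarrow> real" and n :: real and Intf :: "nat \<Rightarrow> nat \<Rightarrow> real"
    and alpha :: "nat \<Rightarrow> real"
  assumes "N \<ge> 1" and "L \<ge> 1"
    and "finite Gw" and "Gw \<noteq> {}" and "Gw \<inter> {1..N} = {}"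
    and "\<forall>l\<in>{1..L}. src l \<in> Gw \<union> {1..N} \<and> dst l \<in> Gw \<union> {1..N}"
    and "\<forall>l\<in>{1..L}. S l > 0" and "n > 0"
    and "\<forall>k\<in>{1..L}. \<forall>l\<in>{1..L}. k \<noteq> l \<longrightarrow> Intf k l \<ge> 0"
    and "\<forall>i\<in>{1..N}. alpha i > 0"
  shows "\<exists>x r dd d.
           lp_optimal L N (\<lambda>i. {l\<in>{1..L}. dst l = i}) (\<lambda>i. {l\<in>{1..L}. src l = i})
             S n Intf alpha x r dd d \<and>
           card {A\<in>link_sets L. x A \<noteq> 0} \<le> N"
proof -
  let ?Inc = "\<lambda>i. {l\<in>{1..L}. dst l = i}" and ?Out = "\<lambda>i. {l\<in>{1..L}. src l = i}"
  have links: "\<forall>i. ?Inc i \<subseteq> {1..L} \<and> ?Out i \<subseteq> {1..L}" by auto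
  have lp: "max_min_lp (link_sets L) {1..N} alpha"
    using assms(1,2,10) by (rule max_min_lp_link_sets)
  interpret max_min_lp "link_sets L" "{1..N}" "\<lambda>i. net_rate (?Inc i) (?Out i) (gamma S n Intf)" alpha
    by (rule lp)
  obtain x d where "vertex x d" and optimal: "\<forall>x' d'. feasible x' d' \<longrightarrow> d' \<le> d"
    using optimal_vertex_exists by blast
  then have "feasible x d" unfolding vertex_def by blast
  then have "lp_feasible L N ?Inc ?Out S n Intf alpha x
      (\<lambda>l. \<Sum>A\<in>{A\<in>link_sets L. l \<in> A}. x A * gamma S n Intf l A) (\<lambda>i. gain i x) d"
    by (rule feasible_imp_lp_feasible[OF links lp])
  then have "lp_optimal L N ?Inc ?Out S n Intf alpha x
      (\<lambda>l. \<Sum>A\<in>{A\<in>link_sets L. l \<in> A}. x A * gamma S n Intf l A) (\<lambda>i. gain i x) d"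
    unfolding lp_optimal_def using optimal lp_feasible_imp_feasible[OF links lp] by blast
  moreover have "card {A\<in>link_sets L. x A \<noteq> 0} \<le> N"
    using vertex_support_card_le[OF \<open>vertex x d\<close>] by (simp add: support_def)
  ultimately show ?thesis by blast
qed

end
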